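(* Let $E$ be a finite dimensional Banach space and let $(C_n)_{n=1}^{\infty}$ be a nested sequence ($C_{n+1}\subseteq C_n$) of closed convex subsets of $E$ such that $\bigcap_{n=1}^{\infty}C_n=\{p\}$ for some point $p\in E$. Then $diam(C_n)\to 0$ as $n\to\infty$.
   Context: Diameters are taken with respect to the norm of $E$ (and may be infinite). *)

theory Defs
  imports "HOL-Analysis.Analysis"
begin

text \<open>Extended-real diameter with respect to the norm (possibly infinite);
  the library's diameter is 0 for unbounded sets, so we use this instead.\<close>
definition ediam :: "'a::metric_space set \<Rightarrow> ereal" where
  "ediam S = (SUP x\<in>S. SUP y\<in>S. ereal (dist x y))"

end

theory Submission imports Defs begin

text \<open>If the diameters did not tend to zero, some sphere around \<open>p\<close> of radius \<open>e > 0\<close>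
  would meet every \<open>C n\<close>: by convexity, the segment from \<open>p\<close> to a far point of \<open>C n\<close>
  crosses the sphere inside \<open>C n\<close>. In finite dimensions these crossing points have a
  convergent subsequence; since the sets are closed and nested its limit lies in every
  \<open>C n\<close>, hence equals \<open>p\<close>, yet it has distance \<open>e\<close> from \<open>p\<close>.\<close>

lemma closed_if_bounded_sequences_subconverge:
  fixes S :: "'a::real_normed_vector set"
  assumes subconv: "\<And>f :: nat \<Rightarrow> 'a. range f \<subseteq> S \<Longrightarrow> bounded (range f) \<Longrightarrow>
                      \<exists>l r. strict_mono r \<and> l \<in> S \<and> (f \<circ> r) \<longlonglongrightarrow> l"
  shows "closed S"
proof (rule closed_sequential_limits[THEN iffD2], intro allI impI, elim conjE)
  fix g l assume g: "\<forall>n. g n \<in> S" and gl: "g \<longlonglongrightarrow> l"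
  obtain l' r where r: "strict_mono r" "l' \<in> S" "(g \<circ> r) \<longlonglongrightarrow> l'"
    using subconv[of g] g gl convergent_imp_bounded by blast
  have "(g \<circ> r) \<longlonglongrightarrow> l" using gl r(1) by (rule LIMSEQ_subseq_LIMSEQ)
  with r(2,3) show "l \<in> S" using LIMSEQ_unique by metis
qed

lemma abs_mult_infdist_le_norm_scaleR_add:
  fixes b y :: "'a::real_normed_vector"
  assumes "subspace S" "y \<in> S"
  shows "\<bar>t\<bar> * infdist b S \<le> norm (t *\<^sub>R b + y)"
proof (cases "t = 0")
  case False
  have "- (1/t) *\<^sub>R y \<in> S" using assms by (simp add: subspace_neg subspace_scale)
  then have "infdist b S \<le> norm (b + (1/t) *\<^sub>R y)"
    using infdist_le by (fastforce simp: dist_norm)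
  then have "\<bar>t\<bar> * infdist b S \<le> norm (t *\<^sub>R (b + (1/t) *\<^sub>R y))"
    by (simp add: mult_left_mono)
  also have "t *\<^sub>R (b + (1/t) *\<^sub>R y) = t *\<^sub>R b + y"
    using False by (simp add: scaleR_add_right)
  finally show ?thesis .
qed simp

text \<open>Since \<open>b\<close> has positive distance from the closed subspace \<open>S\<close>, the coefficient of
  \<open>b\<close> is controlled by the norm of the whole vector.\<close>

lemma bounded_components_off_closed_subspace:
  fixes b :: "'a::real_normed_vector"
  assumes "subspace S" "closed S" "b \<notin> S" "\<And>n. y n \<in> S"
    and "bounded (range (\<lambda>n. t n *\<^sub>R b + y n))"
  shows "bounded (range t)" "bounded (range y)"
proof -
  define d where "d = infdist b S"
  have "d > 0"
    unfolding d_def using assms(1-3) subspace_0 by (intro infdist_pos_not_in_closed) auto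
  obtain M where M: "\<And>n. norm (t n *\<^sub>R b + y n) \<le> M"
    using assms(5) by (auto simp: bounded_iff)
  have t_bound: "\<bar>t n\<bar> \<le> M / d" for n
  proof -
    have "\<bar>t n\<bar> * d \<le> M"
      using abs_mult_infdist_le_norm_scaleR_add[OF assms(1,4)] M[of n] order_trans
      unfolding d_def by blast
    then show ?thesis using \<open>d > 0\<close> by (simp add: field_simps)
  qed
  then show "bounded (range t)" by (auto simp: bounded_iff intro!: exI[of _ "M / d"])
  have "norm (y n) \<le> M + M / d * norm b" for n
  proof -
    have "norm (y n) \<le> norm (t n *\<^sub>R b + y n) + norm (t n *\<^sub>R b)"
      using norm_triangle_ineq4[of "t n *\<^sub>R b + y n" "t n *\<^sub>R b"] by simp
    also have "\<dots> \<le> M + M / d * norm b"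
      using M[of n] mult_right_mono[OF t_bound[of n] norm_ge_zero[of b]] by simp
    finally show ?thesis .
  qed
  then show "bounded (range y)" by (auto simp: bounded_iff intro!: exI[of _ "M + M / d * norm b"])
qed

lemma bounded_sequence_in_span_insert_subconverges:
  fixes S :: "'a::real_normed_vector set" and f :: "nat \<Rightarrow> 'a"
  assumes "subspace S" "b \<notin> S"
    and subconv: "\<And>g :: nat \<Rightarrow> 'a. range g \<subseteq> S \<Longrightarrow> bounded (range g) \<Longrightarrow>
                    \<exists>l r. strict_mono r \<and> l \<in> S \<and> (g \<circ> r) \<longlonglongrightarrow> l"
    and "range f \<subseteq> span (insert b S)" "bounded (range f)"
  shows "\<exists>l r. strict_mono r \<and> l \<in> span (insert b S) \<and> (f \<circ> r) \<longlonglongrightarrow> l"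
proof -
  have "f n \<in> span (insert b S)" for n using assms(4) by auto
  then have "\<forall>n. \<exists>t. f n - t *\<^sub>R b \<in> S"
    using span_breakdown_eq[of _ b S] span_eq_iff[THEN iffD2, OF assms(1)] by simp
  then obtain t where t: "\<And>n. f n - t n *\<^sub>R b \<in> S" by metis
  define y where "y n = f n - t n *\<^sub>R b" for n
  have y: "y n \<in> S" for n using t by (simp add: y_def)
  have f_eq: "f = (\<lambda>n. t n *\<^sub>R b + y n)" by (simp add: y_def)
  have "closed S" using subconv by (rule closed_if_bounded_sequences_subconverge)
  have "bounded (range (\<lambda>n. t n *\<^sub>R b + y n))" using assms(5) f_eq by simp
  note bounded = bounded_components_off_closed_subspace[of S b y t,
      OF assms(1) \<open>closed S\<close> assms(2) y this]
  obtain lt r1 where r1: "strict_mono r1" "(t \<circ> r1) \<longlonglongrightarrow> lt"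
    using bounded(1) bounded_imp_convergent_subsequence by blast
  have "bounded (range (y \<circ> r1))" "range (y \<circ> r1) \<subseteq> S"
    using bounded(2) y by (auto intro: bounded_subset)
  then obtain ly r2 where r2: "strict_mono r2" "ly \<in> S" "(y \<circ> r1 \<circ> r2) \<longlonglongrightarrow> ly"
    using subconv by blast
  have "(t \<circ> r1 \<circ> r2) \<longlonglongrightarrow> lt" using r1(2) r2(1) by (rule LIMSEQ_subseq_LIMSEQ)
  then have "(\<lambda>n. (t \<circ> r1 \<circ> r2) n *\<^sub>R b + (y \<circ> r1 \<circ> r2) n) \<longlonglongrightarrow> lt *\<^sub>R b + ly"
    using r2(3) by (intro tendsto_intros)
  moreover have "(\<lambda>n. (t \<circ> r1 \<circ> r2) n *\<^sub>R b + (y \<circ> r1 \<circ> r2) n) = f \<circ> (r1 \<circ> r2)"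
    by (simp add: f_eq o_def)
  moreover have "lt *\<^sub>R b + ly \<in> span (insert b S)"
    using r2(2) by (meson span_add span_base span_mono span_scale insertI1 subset_insertI subsetD)
  ultimately show ?thesis using strict_mono_o[OF r1(1) r2(1)] by metis
qed

lemma bounded_sequence_in_finite_span_subconverges:
  fixes B :: "'a::real_normed_vector set" and f :: "nat \<Rightarrow> 'a"
  assumes "finite B" "range f \<subseteq> span B" "bounded (range f)"
  shows "\<exists>l r. strict_mono r \<and> l \<in> span B \<and> (f \<circ> r) \<longlonglongrightarrow> l"
  using assms
proof (induction B arbitrary: f rule: finite_induct)
  case empty
  then have "f = (\<lambda>_. 0)" by auto
  then have "strict_mono (id :: nat \<Rightarrow> nat)" "(f \<circ> id) \<longlonglongrightarrow> 0"
    by (auto simp: strict_mono_def)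
  then show ?case using span_zero by blast
next
  case (insert b B)
  show ?case
  proof (cases "b \<in> span B")
    case True
    then show ?thesis using insert.IH insert.prems by (simp add: span_redundant)
  next
    case False
    have span_eq: "span (insert b (span B)) = span (insert b B)"
      by (simp add: span_insert span_span)
    show ?thesis
      using bounded_sequence_in_span_insert_subconverges[OF subspace_span False insert.IH,
          unfolded span_eq] insert.prems by blast
  qed
qed

lemma convex_contains_point_at_distance:
  fixes S :: "'a::real_normed_vector set"
  assumes "convex S" "p \<in> S" "x \<in> S" "0 \<le> e" "e \<le> dist p x"
  shows "\<exists>q\<in>S. dist p q = e"
proof (cases "e = 0")
  case False
  define u where "u = e / norm (x - p)"
  have "norm (x - p) > 0" "e \<le> norm (x - p)"
    using assms(4,5) False by (auto simp: dist_norm norm_minus_commute)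
  then have u: "0 \<le> u" "u \<le> 1" "u * norm (x - p) = e"
    using assms(4) by (auto simp: u_def field_simps)
  then have dist_e: "dist p (p + u *\<^sub>R (x - p)) = e" by (simp add: dist_norm)
  have "(1 - u) *\<^sub>R p + u *\<^sub>R x \<in> S"
    using assms(1-3) u(1,2) by (simp add: convex_def)
  moreover have "(1 - u) *\<^sub>R p + u *\<^sub>R x = p + u *\<^sub>R (x - p)" by (simp add: algebra_simps)
  ultimately show ?thesis using dist_e by metis
qed (use assms(2) in auto)

lemma ediam_nonneg: "x \<in> S \<Longrightarrow> 0 \<le> ediam S"
  unfolding ediam_def by (rule SUP_upper2, assumption, rule SUP_upper2[of x]) auto

lemma ediam_le_if_subset_ball:
  assumes "S \<subseteq> ball p e"
  shows "ediam S \<le> ereal (2 * e)"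
  unfolding ediam_def
proof (intro SUP_least)
  fix x y assume "x \<in> S" "y \<in> S"
  then have "dist p x < e" "dist p y < e" using assms by auto
  then show "ereal (dist x y) \<le> ereal (2 * e)"
    using dist_triangle[of x y p] by (simp add: dist_commute)
qed

lemma nested_subset:
  assumes nested: "\<And>n. n \<ge> 1 \<Longrightarrow> C (Suc n) \<subseteq> C n" and "1 \<le> m" "m \<le> n"
  shows "C n \<subseteq> C m"
  using assms(3)
proof (induction n rule: dec_induct)
  case (step k)
  then show ?case using nested[of k] assms(2) by auto
qed simp

lemma subsequence_limit_in_nested_closed:
  assumes nested: "\<And>n. n \<ge> 1 \<Longrightarrow> C (Suc n) \<subseteq> C n"
    and "closed (C m)" "m \<ge> 1"
    and s: "\<And>n. n \<ge> 1 \<Longrightarrow> s n \<in> C n"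
    and "strict_mono r" "(s \<circ> r) \<longlonglongrightarrow> l"
  shows "l \<in> C m"
proof (rule Lim_in_closed_set[OF \<open>closed (C m)\<close> _ _ \<open>(s \<circ> r) \<longlonglongrightarrow> l\<close>])
  have "s (r n) \<in> C m" if "n \<ge> m" for n
    using seq_suble[OF \<open>strict_mono r\<close>, of n] that \<open>m \<ge> 1\<close>
      nested_subset[of C, OF nested \<open>m \<ge> 1\<close>, of "r n"] s[of "r n"] by auto
  then show "\<forall>\<^sub>F n in sequentially. (s \<circ> r) n \<in> C m"
    by (auto simp: eventually_sequentially)
qed simp

lemma nested_closed_convex_eventually_in_ball:
  fixes C :: "nat \<Rightarrow> 'a::real_normed_vector set" and B :: "'a set"
  assumes findim: "finite B" "span B = UNIV"
    and closed: "\<And>n. n \<ge> 1 \<Longrightarrow> closed (C n)"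
    and convex: "\<And>n. n \<ge> 1 \<Longrightarrow> convex (C n)"
    and nested: "\<And>n. n \<ge> 1 \<Longrightarrow> C (Suc n) \<subseteq> C n"
    and inter: "(\<Inter>n\<in>{1..}. C n) = {p}"
    and "e > 0"
  shows "\<exists>N\<ge>1. C N \<subseteq> ball p e"
proof (rule ccontr)
  assume "\<not> ?thesis"
  then have "\<exists>x\<in>C N. e \<le> dist p x" if "N \<ge> 1" for N
    using that by (auto simp: subset_iff not_less)
  moreover have "p \<in> C N" if "N \<ge> 1" for N using inter that by auto
  ultimately have "\<exists>q\<in>C N. dist p q = e" if "N \<ge> 1" for N
    using convex_contains_point_at_distance[OF convex] \<open>e > 0\<close> that by (meson less_imp_le)
  then obtain q where q: "\<And>N. N \<ge> 1 \<Longrightarrow> q N \<in> C N \<and> dist p (q N) = e" by metis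
  define s where "s n = q (max n 1)" for n
  have s: "s n \<in> C n" if "n \<ge> 1" for n using q[of n] that by (simp add: s_def)
  have "bounded (range s)"
    using q by (auto simp: bounded_def s_def intro!: exI[of _ p] exI[of _ e])
  then obtain l r where r: "strict_mono r" "(s \<circ> r) \<longlonglongrightarrow> l"
    using bounded_sequence_in_finite_span_subconverges[OF findim(1)] findim(2) by blast
  have "l \<in> C m" if "m \<ge> 1" for m
    using subsequence_limit_in_nested_closed[OF nested closed[OF that] that s r] .
  then have "l \<in> (\<Inter>n\<in>{1..}. C n)" by auto
  then have "l = p" using inter by auto
  have "(\<lambda>n. dist p ((s \<circ> r) n)) \<longlonglongrightarrow> dist p l" using r(2) by (intro tendsto_intros)
  moreover have "(\<lambda>n. dist p ((s \<circ> r) n)) = (\<lambda>n. e)" using q by (simp add: s_def)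
  ultimately have "dist p l = e" using LIMSEQ_unique tendsto_const by metis
  with \<open>l = p\<close> \<open>e > 0\<close> show False by simp
qed

theorem proposition3p1:
  fixes C :: "nat \<Rightarrow> 'a::banach set" and p :: 'a
  assumes findim: "\<exists>B. finite B \<and> span B = (UNIV :: 'a set)"
    and closed: "\<And>n. n \<ge> 1 \<Longrightarrow> closed (C n)"
    and convex: "\<And>n. n \<ge> 1 \<Longrightarrow> convex (C n)"
    and nested: "\<And>n. n \<ge> 1 \<Longrightarrow> C (Suc n) \<subseteq> C n"
    and inter: "(\<Inter>n\<in>{1..}. C n) = {p}"
  shows "(\<lambda>n. ediam (C n)) \<longlonglongrightarrow> 0"
proof (rule order_tendstoI)
  fix a :: ereal assume "a < 0"
  have "a < ediam (C n)" if "n \<ge> 1" for n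
  proof -
    have "p \<in> C n" using inter that by auto
    then show ?thesis by (rule order_less_le_trans[OF \<open>a < 0\<close> ediam_nonneg])
  qed
  then show "\<forall>\<^sub>F n in sequentially. a < ediam (C n)" by (rule eventually_sequentiallyI)
next
  fix a :: ereal assume "0 < a"
  obtain e where e: "e > 0" "ereal (2 * e) < a"
  proof (cases a)
    case (real r)
    then show ?thesis using \<open>0 < a\<close> that[of "r / 3"] by simp
  next
    case PInf
    then show ?thesis using that[of 1] by simp
  qed (use \<open>0 < a\<close> in simp)
  obtain B :: "'a set" where B: "finite B" "span B = UNIV" using findim by blast
  obtain N where N: "N \<ge> 1" "C N \<subseteq> ball p e"
    using nested_closed_convex_eventually_in_ball[OF B closed convex nested inter e(1)] by blast
  have "ediam (C n) < a" if "n \<ge> N" for n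
  proof -
    have "C n \<subseteq> ball p e"
      using nested_subset[of C, OF nested N(1) that] N(2) by (rule subset_trans)
    then have "ediam (C n) \<le> ereal (2 * e)" by (rule ediam_le_if_subset_ball)
    then show ?thesis using e(2) by (rule le_less_trans)
  qed
  then show "\<forall>\<^sub>F n in sequentially. ediam (C n) < a" by (rule eventually_sequentiallyI)
qed

end
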